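(* Let $(X,d)$ be a separable complete metric space, $(\Omega,\mathsf{F},\mathbb{P})$ a probability space with a filtration $(\mathsf{F}_n)$, and $S\subseteq X$ non-empty and closed. Let $\phi:X\times X\to[0,\infty)$ be a Carath\'eodory distance with $\phi(x,x)=0$ for all $x\in X$ that satisfies the weak quasi-triangle inequality with a concave nondecreasing function $H:[0,\infty)\to[0,\infty)$. Let $(x_n)$ be an $X$-valued stochastic process adapted to $(\mathsf{F}_n)$ which is stochastically $\phi$-quasi-Fej\'er monotone w.r.t.\ $S$ and $(\mathsf{F}_n)$, i.e.\ there are $(\zeta_n),(\xi_n)\in\ell^1_+(\mathsf{F}_n)$ with $\mathbb{E}[\phi(z,x_{n+1})\mid\mathsf{F}_n]\le(1+\zeta_n)\phi(z,x_n)+\xi_n$ a.s.\ for all $n\in\mathbb{N}$ and all $z\in S$. Suppose that $\mathbb{E}[\phi(o,x_n)]<\infty$ for all $n\in\mathbb{N}$, for some fixed $o\in S$. Then $(x_n)$ is strongly stochastically $\phi$-quasi-Fej\'er monotone w.r.t.\ $S$ and $(\mathsf{F}_n)$ (with the same error sequences).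
   Context: $X$ carries its Borel $\sigma$-algebra. A Carath\'eodory distance is a function $\phi:X\times X\to[0,\infty)$ continuous in its left argument and Borel measurable in its right argument. $\phi$ satisfies the weak quasi-triangle inequality with $H$ if $\phi(x,y)\le H(\phi(x,o)+\phi(y,o))$ for all $x,y,o\in X$. $\ell^1_+(\mathsf{F}_n)$ is the set of sequences of nonnegative random variables $(\xi_n)$ with $\xi_n$ $\mathsf{F}_n$-measurable and $\sum_n\xi_n<\infty$ a.s. Strong stochastic $\phi$-quasi-Fej\'er monotonicity w.r.t.\ $S$ means: $\mathbb{E}[\phi(z,x_{n+1})\mid\mathsf{F}_n]\le(1+\zeta_n)\phi(z,x_n)+\xi_n$ a.s.\ for all $n\in\mathbb{N}$ and all $X$-valued $\mathsf{F}_n$-measurable random variables $z$ with $z\in S$ a.s.\ and $\mathbb{E}[\phi(z,x_n)]<\infty$. *)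

theory Defs
  imports "HOL-Analysis.Analysis" "HOL-Probability.Probability"
begin

definition caratheodory_distance :: "('x::topological_space \<Rightarrow> 'x \<Rightarrow> real) \<Rightarrow> bool" where
  "caratheodory_distance \<phi> \<longleftrightarrow>
     (\<forall>x y. 0 \<le> \<phi> x y) \<and>
     (\<forall>y. continuous_on UNIV (\<lambda>x. \<phi> x y)) \<and>
     (\<forall>x. (\<lambda>y. \<phi> x y) \<in> borel_measurable borel)"

definition weak_quasi_triangle :: "('x \<Rightarrow> 'x \<Rightarrow> real) \<Rightarrow> (real \<Rightarrow> real) \<Rightarrow> bool" where
  "weak_quasi_triangle \<phi> H \<longleftrightarrow> (\<forall>x y o'. \<phi> x y \<le> H (\<phi> x o' + \<phi> y o'))"

definition ell1_plus :: "'b measure \<Rightarrow> (nat \<Rightarrow> 'b measure) \<Rightarrow> (nat \<Rightarrow> 'b \<Rightarrow> real) \<Rightarrow> bool" where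
  "ell1_plus M F \<xi> \<longleftrightarrow>
     (\<forall>n. \<xi> n \<in> borel_measurable (F n)) \<and>
     (\<forall>n. \<forall>\<omega>\<in>space M. 0 \<le> \<xi> n \<omega>) \<and>
     (AE \<omega> in M. summable (\<lambda>n. \<xi> n \<omega>))"

end

theory Submission
  imports Defs
begin

text \<open>A random \<open>F\<^sub>n\<close>-measurable \<open>z\<close> is
  approximated pointwise by \<open>F\<^sub>n\<close>-measurable random points \<open>z\<^sub>k\<close> with values in a countable
  dense subset of \<open>S\<close>. Conditional expectation is local on the \<open>F\<^sub>n\<close>-measurable events
  \<open>{z\<^sub>k = d}\<close>, so the bound holds for every \<open>z\<^sub>k\<close>; continuity of \<open>\<phi>\<close> in its left argument
  and the conditional Fatou lemma carry it over to \<open>z\<close>.\<close>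

context sigma_finite_subalgebra
begin

lemma nn_cond_exp_countable_index:
  fixes J :: "'a \<Rightarrow> nat" and f :: "nat \<Rightarrow> 'a \<Rightarrow> ennreal"
  assumes J[measurable]: "J \<in> measurable F (count_space UNIV)"
    and f[measurable]: "\<And>i. f i \<in> borel_measurable M"
  shows "AE \<omega> in M. nn_cond_exp M F (\<lambda>\<omega>. f (J \<omega>) \<omega>) \<omega> = nn_cond_exp M F (f (J \<omega>)) \<omega>"
proof -
  have [measurable]: "J \<in> measurable M (count_space UNIV)"
    using measurable_from_subalg[OF subalg J] .
  have "AE \<omega> in M. J \<omega> = i \<longrightarrow> nn_cond_exp M F (\<lambda>\<omega>. f (J \<omega>) \<omega>) \<omega> = nn_cond_exp M F (f i) \<omega>"
    for i
  proof -
    define ind where "ind = (\<lambda>\<omega>. if J \<omega> = i then 1 else (0::ennreal))"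
    have [measurable]: "ind \<in> borel_measurable F"
      unfolding ind_def by measurable
    have "(\<lambda>\<omega>. ind \<omega> * f (J \<omega>) \<omega>) = (\<lambda>\<omega>. ind \<omega> * f i \<omega>)"
      by (auto simp: ind_def)
    then have "AE \<omega> in M. ind \<omega> * nn_cond_exp M F (\<lambda>\<omega>. f (J \<omega>) \<omega>) \<omega>
        = nn_cond_exp M F (\<lambda>\<omega>. ind \<omega> * f i \<omega>) \<omega>"
      using nn_cond_exp_prod[of ind "\<lambda>\<omega>. f (J \<omega>) \<omega>"] by simp
    moreover have "AE \<omega> in M. ind \<omega> * nn_cond_exp M F (f i) \<omega>
        = nn_cond_exp M F (\<lambda>\<omega>. ind \<omega> * f i \<omega>) \<omega>"
      by (rule nn_cond_exp_prod) auto
    ultimately show ?thesis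
      by eventually_elim (auto simp: ind_def)
  qed
  then have "AE \<omega> in M. \<forall>i. J \<omega> = i \<longrightarrow>
      nn_cond_exp M F (\<lambda>\<omega>. f (J \<omega>) \<omega>) \<omega> = nn_cond_exp M F (f i) \<omega>"
    unfolding AE_all_countable by blast
  then show ?thesis
    by eventually_elim auto
qed

lemma nn_cond_exp_SUP:
  fixes g :: "nat \<Rightarrow> 'a \<Rightarrow> ennreal"
  assumes inc: "incseq g" and g[measurable]: "\<And>m. g m \<in> borel_measurable M"
  shows "AE \<omega> in M. nn_cond_exp M F (\<lambda>\<omega>. SUP m. g m \<omega>) \<omega> = (SUP m. nn_cond_exp M F (g m) \<omega>)"
proof -
  have g_Suc: "g m \<omega> \<le> g (Suc m) \<omega>" for m \<omega>
    using inc by (simp add: incseq_Suc_iff le_fun_def)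
  have cond_exp_Suc: "AE \<omega> in M. nn_cond_exp M F (g m) \<omega> \<le> nn_cond_exp M F (g (Suc m)) \<omega>" for m
    by (rule nn_cond_exp_mono) (auto simp: g_Suc)
  have indicator_cond_exp_Suc: "AE \<omega> in M. indicator A \<omega> * nn_cond_exp M F (g m) \<omega>
      \<le> indicator A \<omega> * nn_cond_exp M F (g (Suc m)) \<omega>" for A m
    using cond_exp_Suc[of m] by eventually_elim (rule mult_left_mono, auto)
  have "AE \<omega> in M. (SUP m. nn_cond_exp M F (g m) \<omega>) = nn_cond_exp M F (\<lambda>\<omega>. SUP m. g m \<omega>) \<omega>"
  proof (rule nn_cond_exp_charact)
    fix A assume [measurable]: "A \<in> sets F"
    then have [measurable]: "A \<in> sets M"
      using subalg by (meson subalgebra_def subsetD)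
    have "(\<integral>\<^sup>+ \<omega>\<in>A. (SUP m. g m \<omega>) \<partial>M) = (\<integral>\<^sup>+ \<omega>. (SUP m. indicator A \<omega> * g m \<omega>) \<partial>M)"
      by (simp add: SUP_mult_left_ennreal mult.commute)
    also have "\<dots> = (SUP m. \<integral>\<^sup>+ \<omega>. indicator A \<omega> * g m \<omega> \<partial>M)"
      by (rule nn_integral_monotone_convergence_SUP_AE) (auto intro!: mult_left_mono g_Suc)
    also have "\<dots> = (SUP m. \<integral>\<^sup>+ \<omega>. indicator A \<omega> * nn_cond_exp M F (g m) \<omega> \<partial>M)"
      by (simp add: nn_cond_exp_intg)
    also have "\<dots> = (\<integral>\<^sup>+ \<omega>. (SUP m. indicator A \<omega> * nn_cond_exp M F (g m) \<omega>) \<partial>M)"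
      by (rule nn_integral_monotone_convergence_SUP_AE[symmetric]) (auto intro: indicator_cond_exp_Suc)
    also have "\<dots> = (\<integral>\<^sup>+ \<omega>\<in>A. (SUP m. nn_cond_exp M F (g m) \<omega>) \<partial>M)"
      by (simp add: SUP_mult_left_ennreal mult.commute)
    finally show "(\<integral>\<^sup>+ \<omega>\<in>A. (SUP m. g m \<omega>) \<partial>M)
        = (\<integral>\<^sup>+ \<omega>\<in>A. (SUP m. nn_cond_exp M F (g m) \<omega>) \<partial>M)" .
  qed auto
  then show ?thesis
    by eventually_elim simp
qed

lemma nn_cond_exp_liminf_le:
  fixes g :: "nat \<Rightarrow> 'a \<Rightarrow> ennreal"
  assumes [measurable]: "\<And>k. g k \<in> borel_measurable M"
  shows "AE \<omega> in M. nn_cond_exp M F (\<lambda>\<omega>. liminf (\<lambda>k. g k \<omega>)) \<omega>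
           \<le> liminf (\<lambda>k. nn_cond_exp M F (g k) \<omega>)"
proof -
  define h where "h = (\<lambda>m \<omega>. INF k\<in>{m..}. g k \<omega>)"
  have [measurable]: "h m \<in> borel_measurable M" for m
    unfolding h_def by measurable
  have "incseq h"
    unfolding h_def by (intro monoI le_funI INF_superset_mono) auto
  then have SUP_h: "AE \<omega> in M. nn_cond_exp M F (\<lambda>\<omega>. SUP m. h m \<omega>) \<omega>
      = (SUP m. nn_cond_exp M F (h m) \<omega>)"
    by (rule nn_cond_exp_SUP) simp
  have "AE \<omega> in M. m \<le> k \<longrightarrow> nn_cond_exp M F (h m) \<omega> \<le> nn_cond_exp M F (g k) \<omega>" for m k
    by (cases "m \<le> k") (auto simp: h_def intro!: nn_cond_exp_mono INF_lower)
  then have "AE \<omega> in M. \<forall>m k. m \<le> k \<longrightarrow> nn_cond_exp M F (h m) \<omega> \<le> nn_cond_exp M F (g k) \<omega>"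
    by (simp add: AE_all_countable)
  with SUP_h show ?thesis
  proof eventually_elim
    case (elim \<omega>)
    have "nn_cond_exp M F (\<lambda>\<omega>. liminf (\<lambda>k. g k \<omega>)) \<omega> = (SUP m. nn_cond_exp M F (h m) \<omega>)"
      using elim(1) by (simp add: liminf_SUP_INF h_def)
    also have "\<dots> \<le> (SUP m. INF k\<in>{m..}. nn_cond_exp M F (g k) \<omega>)"
      using elim(2) by (auto intro!: SUP_mono' INF_greatest)
    finally show ?case
      by (simp add: liminf_SUP_INF)
  qed
qed

end

lemma measurable_approx_from_dense_sequence:
  fixes z :: "'a \<Rightarrow> 'x::{metric_space, second_countable_topology}"
  assumes "S \<noteq> {}" and [measurable]: "z \<in> measurable F borel"
  obtains d :: "nat \<Rightarrow> 'x" and J :: "nat \<Rightarrow> 'a \<Rightarrow> nat"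
  where "range d \<subseteq> S" and "\<And>k. J k \<in> measurable F (count_space UNIV)"
    and "\<And>\<omega>. z \<omega> \<in> S \<Longrightarrow> (\<lambda>k. d (J k \<omega>)) \<longlonglongrightarrow> z \<omega>"
proof -
  obtain T where T: "countable T" "T \<subseteq> S" "S \<subseteq> closure T"
    using separable[of S] by blast
  with \<open>S \<noteq> {}\<close> have "T \<noteq> {}" by auto
  define d where "d = from_nat_into T"
  have range_d: "range d = T"
    unfolding d_def using T(1) \<open>T \<noteq> {}\<close> by (simp add: range_from_nat_into)
  have near: "\<exists>i. dist y (d i) < inverse (Suc k)" if "y \<in> S" for y k
  proof -
    from that T(3) have "y \<in> closure T" by blast
    then obtain t where "t \<in> T" "dist t y < inverse (Suc k)"
      unfolding closure_approachable by (metis inverse_positive_iff_positive of_nat_0_less_iff zero_less_Suc)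
    with range_d show ?thesis
      by (metis dist_commute imageE)
  qed
  define J where "J = (\<lambda>k \<omega>. LEAST i. dist (z \<omega>) (d i) < inverse (Suc k))"
  have "J k \<in> measurable F (count_space UNIV)" for k
    unfolding J_def by measurable
  moreover have "(\<lambda>k. d (J k \<omega>)) \<longlonglongrightarrow> z \<omega>" if "z \<omega> \<in> S" for \<omega>
  proof (rule metric_LIMSEQ_I)
    fix r :: real assume "0 < r"
    then obtain N where N: "inverse (Suc N) < r"
      using reals_Archimedean by blast
    have "dist (d (J k \<omega>)) (z \<omega>) < r" if "N \<le> k" for k
    proof -
      have "dist (z \<omega>) (d (J k \<omega>)) < inverse (Suc k)"
        unfolding J_def by (rule LeastI_ex) (rule near[OF \<open>z \<omega> \<in> S\<close>])
      also have "\<dots> \<le> inverse (Suc N)"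
        using \<open>N \<le> k\<close> by (simp add: le_imp_inverse_le)
      finally show ?thesis
        using N by (simp add: dist_commute)
    qed
    then show "\<exists>N. \<forall>k\<ge>N. dist (d (J k \<omega>)) (z \<omega>) < r"
      by blast
  qed
  ultimately show ?thesis
    using that range_d T(2) by blast
qed

lemma (in sigma_finite_subalgebra) nn_cond_exp_le_at_measurable_point:
  fixes f b :: "'x::{metric_space, second_countable_topology} \<Rightarrow> 'a \<Rightarrow> ennreal"
    and z :: "'a \<Rightarrow> 'x"
  assumes "S \<noteq> {}"
    and f[measurable]: "\<And>y. f y \<in> borel_measurable M"
    and f_cont: "\<And>\<omega>. continuous_on S (\<lambda>y. f y \<omega>)"
    and b_cont: "\<And>\<omega>. continuous_on S (\<lambda>y. b y \<omega>)"
    and bound: "\<And>y. y \<in> S \<Longrightarrow> AE \<omega> in M. nn_cond_exp M F (f y) \<omega> \<le> b y \<omega>"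
    and z[measurable]: "z \<in> measurable F borel" and zS: "AE \<omega> in M. z \<omega> \<in> S"
  shows "AE \<omega> in M. nn_cond_exp M F (\<lambda>\<omega>. f (z \<omega>) \<omega>) \<omega> \<le> b (z \<omega>) \<omega>"
proof (cases "(\<lambda>\<omega>. f (z \<omega>) \<omega>) \<in> borel_measurable M")
  case False
  \<comment> \<open>\<open>nn_cond_exp\<close> returns the junk value \<open>0\<close> on non-measurable functions\<close>
  then have "nn_cond_exp M F (\<lambda>\<omega>. f (z \<omega>) \<omega>) = (\<lambda>_. 0)"
    unfolding nn_cond_exp_def by (intro if_not_P) blast
  then show ?thesis
    by (intro AE_I2) (simp only: zero_le)
next
  case True
  note [measurable] = True
  obtain d and J :: "nat \<Rightarrow> 'a \<Rightarrow> nat" where d: "range d \<subseteq> S"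
    and J[measurable]: "\<And>k. J k \<in> measurable F (count_space UNIV)"
    and lim: "\<And>\<omega>. z \<omega> \<in> S \<Longrightarrow> (\<lambda>k. d (J k \<omega>)) \<longlonglongrightarrow> z \<omega>"
    by (rule measurable_approx_from_dense_sequence[OF \<open>S \<noteq> {}\<close> z]) (rule that)
  have [measurable]: "J k \<in> measurable M (count_space UNIV)" for k
    using measurable_from_subalg[OF subalg J] .
  have liminf_at: "liminf (\<lambda>k. h (d (J k \<omega>)) \<omega>) = h (z \<omega>) \<omega>"
    if "continuous_on S (\<lambda>y. h y \<omega>)" "z \<omega> \<in> S" for h :: "'x \<Rightarrow> 'a \<Rightarrow> ennreal" and \<omega>
  proof (rule lim_imp_Liminf)
    show "(\<lambda>k. h (d (J k \<omega>)) \<omega>) \<longlonglongrightarrow> h (z \<omega>) \<omega>"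
      by (rule continuous_on_tendsto_compose[OF that(1) lim[OF that(2)] that(2)])
         (use d in \<open>auto intro: always_eventually\<close>)
  qed simp
  define g where "g = (\<lambda>k \<omega>. f (d (J k \<omega>)) \<omega>)"
  have [measurable]: "g k \<in> borel_measurable M" for k
    unfolding g_def by (rule measurable_compose_countable[where f="\<lambda>i. f (d i)"]) measurable
  have "AE \<omega> in M. \<forall>k. nn_cond_exp M F (g k) \<omega> = nn_cond_exp M F (f (d (J k \<omega>))) \<omega>"
    unfolding AE_all_countable g_def
    by (intro allI nn_cond_exp_countable_index[where f="\<lambda>i. f (d i)"]) measurable
  moreover have "AE \<omega> in M. \<forall>i. nn_cond_exp M F (f (d i)) \<omega> \<le> b (d i) \<omega>"
    unfolding AE_all_countable using bound d by blast
  moreover have "AE \<omega> in M. nn_cond_exp M F (\<lambda>\<omega>. f (z \<omega>) \<omega>) \<omega>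
      = nn_cond_exp M F (\<lambda>\<omega>. liminf (\<lambda>k. g k \<omega>)) \<omega>"
  proof (rule nn_cond_exp_cong)
    show "AE \<omega> in M. f (z \<omega>) \<omega> = liminf (\<lambda>k. g k \<omega>)"
      using zS unfolding g_def by eventually_elim (rule liminf_at[OF f_cont, symmetric])
  qed measurable
  moreover have "AE \<omega> in M. nn_cond_exp M F (\<lambda>\<omega>. liminf (\<lambda>k. g k \<omega>)) \<omega>
      \<le> liminf (\<lambda>k. nn_cond_exp M F (g k) \<omega>)"
    by (rule nn_cond_exp_liminf_le) measurable
  ultimately show ?thesis
    using zS
  proof eventually_elim
    case (elim \<omega>)
    have "nn_cond_exp M F (\<lambda>\<omega>. f (z \<omega>) \<omega>) \<omega> \<le> liminf (\<lambda>k. nn_cond_exp M F (g k) \<omega>)"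
      using elim(3,4) by simp
    also have "\<dots> \<le> liminf (\<lambda>k. b (d (J k \<omega>)) \<omega>)"
      using elim(1,2) by (intro Liminf_mono) simp
    also have "\<dots> = b (z \<omega>) \<omega>"
      using elim(5) by (rule liminf_at[OF b_cont])
    finally show ?case .
  qed
qed

theorem proposition4p5:
  fixes M :: "'b measure" and F :: "nat \<Rightarrow> 'b measure"
    and S :: "'x::polish_space set" and \<phi> :: "'x \<Rightarrow> 'x \<Rightarrow> real"
    and H :: "real \<Rightarrow> real" and x :: "nat \<Rightarrow> 'b \<Rightarrow> 'x"
    and \<zeta> \<xi> :: "nat \<Rightarrow> 'b \<Rightarrow> real" and o' :: 'x
  assumes "prob_space M"
    and "filtration (space M) F"
    and "\<And>n. subalgebra M (F n)"
    and "S \<noteq> {}" and "closed S"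
    and "caratheodory_distance \<phi>"
    and "\<And>y. \<phi> y y = 0"
    and "concave_on {0..} H" and "mono_on {0..} H" and "\<And>t. 0 \<le> t \<Longrightarrow> 0 \<le> H t"
    and "weak_quasi_triangle \<phi> H"
    and "\<And>n. x n \<in> measurable (F n) borel"
    and "ell1_plus M F \<zeta>" and "ell1_plus M F \<xi>"
    and "\<And>n z. z \<in> S \<Longrightarrow>
           AE \<omega> in M. nn_cond_exp M (F n) (\<lambda>\<omega>. ennreal (\<phi> z (x (Suc n) \<omega>))) \<omega>
                       \<le> ennreal ((1 + \<zeta> n \<omega>) * \<phi> z (x n \<omega>) + \<xi> n \<omega>)"
    and "o' \<in> S"
    and "\<And>n. (\<integral>\<^sup>+ \<omega>. ennreal (\<phi> o' (x n \<omega>)) \<partial>M) < \<infinity>"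
  shows "\<forall>n. \<forall>z. z \<in> measurable (F n) borel \<and> (AE \<omega> in M. z \<omega> \<in> S)
               \<and> (\<integral>\<^sup>+ \<omega>. ennreal (\<phi> (z \<omega>) (x n \<omega>)) \<partial>M) < \<infinity> \<longrightarrow>
           (AE \<omega> in M. nn_cond_exp M (F n) (\<lambda>\<omega>. ennreal (\<phi> (z \<omega>) (x (Suc n) \<omega>))) \<omega>
                       \<le> ennreal ((1 + \<zeta> n \<omega>) * \<phi> (z \<omega>) (x n \<omega>) + \<xi> n \<omega>))"
proof (intro allI impI)
  fix n :: nat and z :: "'b \<Rightarrow> 'x"
  assume "z \<in> measurable (F n) borel \<and> (AE \<omega> in M. z \<omega> \<in> S)
    \<and> (\<integral>\<^sup>+ \<omega>. ennreal (\<phi> (z \<omega>) (x n \<omega>)) \<partial>M) < \<infinity>"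
  then have z: "z \<in> measurable (F n) borel" and zS: "AE \<omega> in M. z \<omega> \<in> S"
    by auto
  interpret prob_space M by fact
  interpret finite_measure_subalgebra M "F n"
    by unfold_locales (fact assms(3))
  have \<phi>_cont: "continuous_on UNIV (\<lambda>y. \<phi> y x')" and \<phi>_meas: "\<phi> y \<in> borel_measurable borel" for x' y
    using assms(6) unfolding caratheodory_distance_def by auto
  have [measurable]: "x (Suc n) \<in> borel_measurable M"
    using measurable_from_subalg[OF assms(3) assms(12)] .
  show "AE \<omega> in M. nn_cond_exp M (F n) (\<lambda>\<omega>. ennreal (\<phi> (z \<omega>) (x (Suc n) \<omega>))) \<omega>
      \<le> ennreal ((1 + \<zeta> n \<omega>) * \<phi> (z \<omega>) (x n \<omega>) + \<xi> n \<omega>)"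
  proof (rule nn_cond_exp_le_at_measurable_point[OF \<open>S \<noteq> {}\<close> _ _ _ _ z zS,
        where f="\<lambda>y \<omega>. ennreal (\<phi> y (x (Suc n) \<omega>))"
          and b="\<lambda>y \<omega>. ennreal ((1 + \<zeta> n \<omega>) * \<phi> y (x n \<omega>) + \<xi> n \<omega>)"])
    show "(\<lambda>\<omega>. ennreal (\<phi> y (x (Suc n) \<omega>))) \<in> borel_measurable M" for y
      using \<phi>_meas[of y] by measurable
    show "continuous_on S (\<lambda>y. ennreal (\<phi> y (x (Suc n) \<omega>)))" for \<omega>
      using \<phi>_cont by (intro continuous_on_ennreal) (auto intro: continuous_on_subset)
    show "continuous_on S (\<lambda>y. ennreal ((1 + \<zeta> n \<omega>) * \<phi> y (x n \<omega>) + \<xi> n \<omega>))" for \<omega>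
      using \<phi>_cont by (intro continuous_on_ennreal continuous_intros) (auto intro: continuous_on_subset)
  qed (fact assms(15))
qed

end
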